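(* Under the standing setup, $e(U)\geq 4$; in particular $G^\ast[U]$ has at least one non-trivial component.
   Context: Standing setup: Let $m\geq 88$. Let $\mathcal{G}(m,F_6)$ be the set of $F_6$-free graphs with exactly $m$ edges and no isolated vertices, where $F_6=K_1\vee P_5$ (a vertex joined to every vertex of a path on 5 vertices). Let $G^\ast\in\mathcal{G}(m,F_6)$ have the maximum spectral radius among all graphs in $\mathcal{G}(m,F_6)$; $G^\ast$ is connected. Let $\lambda=\lambda(G^\ast)$ be its spectral radius and $\mathbf{x}$ its Perron vector (positive unit eigenvector for $\lambda$), with entry $x_v$ at vertex $v$. Let $u^\ast$ be a vertex with $x_{u^\ast}=\max_v x_v$. Set $U=N_{G^\ast}(u^\ast)$ and $W=V(G^\ast)\setminus N_{G^\ast}[u^\ast]$. For $X,Y\subseteq V(G^\ast)$, $e(X,Y)$ is the number of edges with one end in $X$ and the other in $Y$, and $e(X)$ is the number of edges inside $X$. *)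

theory Defs
  imports Complex_Main
begin

definition simple_graph :: "'a set \<Rightarrow> ('a \<Rightarrow> 'a \<Rightarrow> bool) \<Rightarrow> bool" where
  "simple_graph V E \<longleftrightarrow> finite V \<and> (\<forall>u v. E u v \<longrightarrow> u \<in> V \<and> v \<in> V)
     \<and> (\<forall>u v. E u v \<longrightarrow> E v u) \<and> (\<forall>v. \<not> E v v)"

definition edges_in :: "('a \<Rightarrow> 'a \<Rightarrow> bool) \<Rightarrow> 'a set \<Rightarrow> 'a set set" where
  "edges_in E X = {{u, v} | u v. u \<in> X \<and> v \<in> X \<and> E u v}"

definition e_in :: "('a \<Rightarrow> 'a \<Rightarrow> bool) \<Rightarrow> 'a set \<Rightarrow> nat" where
  "e_in E X = card (edges_in E X)"

definition num_edges :: "'a set \<Rightarrow> ('a \<Rightarrow> 'a \<Rightarrow> bool) \<Rightarrow> nat" where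
  "num_edges V E = e_in E V"

definition no_isolated :: "'a set \<Rightarrow> ('a \<Rightarrow> 'a \<Rightarrow> bool) \<Rightarrow> bool" where
  "no_isolated V E \<longleftrightarrow> (\<forall>v\<in>V. \<exists>w. E v w)"

definition connected_graph :: "'a set \<Rightarrow> ('a \<Rightarrow> 'a \<Rightarrow> bool) \<Rightarrow> bool" where
  "connected_graph V E \<longleftrightarrow> V \<noteq> {} \<and> (\<forall>u\<in>V. \<forall>v\<in>V. E\<^sup>*\<^sup>* u v)"

definition neighbourhood :: "('a \<Rightarrow> 'a \<Rightarrow> bool) \<Rightarrow> 'a \<Rightarrow> 'a set" where
  "neighbourhood E v = {w. E v w}"

definition contains_subgraph ::
  "'a set \<Rightarrow> ('a \<Rightarrow> 'a \<Rightarrow> bool) \<Rightarrow> 'b set \<Rightarrow> ('b \<Rightarrow> 'b \<Rightarrow> bool) \<Rightarrow> bool" where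
  "contains_subgraph VG EG VH EH \<longleftrightarrow>
     (\<exists>f. inj_on f VH \<and> f ` VH \<subseteq> VG \<and> (\<forall>u\<in>VH. \<forall>v\<in>VH. EH u v \<longrightarrow> EG (f u) (f v)))"

text \<open>F_6 = K_1 join P_5: vertex 0 joined to every vertex of the path 1-2-3-4-5.\<close>
definition F6_V :: "nat set" where "F6_V = {0..5}"

definition F6_E :: "nat \<Rightarrow> nat \<Rightarrow> bool" where
  "F6_E u v \<longleftrightarrow> u \<in> F6_V \<and> v \<in> F6_V \<and> u \<noteq> v \<and>
     (u = 0 \<or> v = 0 \<or> (u \<ge> 1 \<and> v \<ge> 1 \<and> (v = u + 1 \<or> u = v + 1)))"

definition F6_free :: "'a set \<Rightarrow> ('a \<Rightarrow> 'a \<Rightarrow> bool) \<Rightarrow> bool" where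
  "F6_free V E \<longleftrightarrow> \<not> contains_subgraph V E F6_V F6_E"

definition in_GmF6 :: "nat \<Rightarrow> 'a set \<Rightarrow> ('a \<Rightarrow> 'a \<Rightarrow> bool) \<Rightarrow> bool" where
  "in_GmF6 m V E \<longleftrightarrow> simple_graph V E \<and> F6_free V E \<and> num_edges V E = m \<and> no_isolated V E"

definition adj_eigvec :: "'a set \<Rightarrow> ('a \<Rightarrow> 'a \<Rightarrow> bool) \<Rightarrow> real \<Rightarrow> ('a \<Rightarrow> real) \<Rightarrow> bool" where
  "adj_eigvec V E \<mu> x \<longleftrightarrow> (\<forall>v. v \<notin> V \<longrightarrow> x v = 0) \<and> (\<exists>v\<in>V. x v \<noteq> 0) \<and>
     (\<forall>v\<in>V. (\<Sum>w\<in>V. if E v w then x w else 0) = \<mu> * x v)"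

definition adj_eigval :: "'a set \<Rightarrow> ('a \<Rightarrow> 'a \<Rightarrow> bool) \<Rightarrow> real \<Rightarrow> bool" where
  "adj_eigval V E \<mu> \<longleftrightarrow> (\<exists>x. adj_eigvec V E \<mu> x)"

text \<open>Spectral radius lambda(G): the largest modulus of an eigenvalue of A(G)
(A(G) is real symmetric, so all its eigenvalues are real).\<close>
definition spectral_radius_graph :: "'a set \<Rightarrow> ('a \<Rightarrow> 'a \<Rightarrow> bool) \<Rightarrow> real" where
  "spectral_radius_graph V E = Max {\<bar>\<mu>\<bar> | \<mu>. adj_eigval V E \<mu>}"

definition perron_vector :: "'a set \<Rightarrow> ('a \<Rightarrow> 'a \<Rightarrow> bool) \<Rightarrow> ('a \<Rightarrow> real) \<Rightarrow> bool" where
  "perron_vector V E x \<longleftrightarrow> adj_eigvec V E (spectral_radius_graph V E) x \<and>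
     (\<forall>v\<in>V. x v > 0) \<and> (\<Sum>v\<in>V. (x v)\<^sup>2) = 1"

end

theory Submission
  imports Defs "Jordan_Normal_Form.Char_Poly"
begin

(* Compare G with the book K_2 + kK_1 on m = 2k + 1 edges (plus one disjoint edge when m is
   even).  It is F_6-free, since every triangle uses both spine vertices, and it has an eigenvalue
   mu with mu^2 = mu + 2k; by extremality lambda >= mu.  On the other hand, summing the eigenvalue
   equation over the neighbours of u* and bounding every x_w by x_{u*} gives
   lambda^2 <= sum_{u in U} d(u) <= m + e(U).  Hence e(U) >= mu + 2k - m >= mu - 2 > 3. *)

lemma card_filter_eq_sum_indicator:
  "finite A \<Longrightarrow> card {x\<in>A. P x} = (\<Sum>x\<in>A. if P x then 1 else 0)"
  by (simp add: sum.inter_filter[symmetric])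

lemma sum_degree_eq_twice_edges:
  assumes fin: "finite X" and sym: "\<And>u v. E u v \<Longrightarrow> E v u" and irr: "\<And>v. \<not> E v v"
  shows "(\<Sum>u\<in>X. card {w\<in>X. E u w}) = 2 * e_in E X"
proof -
  define P where "P = {(u, v). u \<in> X \<and> v \<in> X \<and> E u v}"
  define ends where "ends = (\<lambda>(u, v). {u, v} :: 'a set)"
  have "finite P" using fin unfolding P_def by (auto intro: finite_subset[of _ "X \<times> X"])
  have edges: "edges_in E X = ends ` P"
    unfolding edges_in_def P_def ends_def by auto
  have "card P = (\<Sum>u\<in>X. card {w\<in>X. E u w})"
  proof -
    have "P = Sigma X (\<lambda>u. {w\<in>X. E u w})" unfolding P_def by auto
    then show ?thesis using fin by (simp add: card_SigmaI)
  qed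
  moreover have fibre: "card {p\<in>P. ends p = e} = 2" if e: "e \<in> ends ` P" for e
  proof -
    obtain u v where uv: "(u, v) \<in> P" "e = {u, v}" using e unfolding ends_def by force
    then have "u \<noteq> v" using irr unfolding P_def by auto
    moreover have "{p\<in>P. ends p = e} = {(u, v), (v, u)}"
      using uv sym unfolding P_def ends_def by (auto simp: doubleton_eq_iff)
    ultimately show ?thesis by simp
  qed
  have "card P = (\<Sum>e\<in>ends ` P. card {p\<in>P. ends p = e})"
    using card_eq_sum sum.image_gen[OF \<open>finite P\<close>, of "\<lambda>_. 1::nat" ends] by simp
  also have "\<dots> = 2 * card (ends ` P)" using fibre by simp
  finally show ?thesis using edges unfolding e_in_def by simp
qed

lemma sum_degree_le_edges_add_inner_edges:
  assumes fin: "finite V" and sym: "\<And>u v. E u v \<Longrightarrow> E v u" and irr: "\<And>v. \<not> E v v"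
    and UV: "U \<subseteq> V"
  shows "(\<Sum>u\<in>U. card {w\<in>V. E u w}) \<le> e_in E V + e_in E U"
proof -
  have finU: "finite U" using fin UV finite_subset by auto
  define cut where "cut = (\<Sum>u\<in>U. card {w\<in>V-U. E u w})"
  have deg_split: "card {w\<in>V. E u w} = card {w\<in>U. E u w} + card {w\<in>V-U. E u w}" for u
  proof -
    have "{w\<in>V. E u w} = {w\<in>U. E u w} \<union> {w\<in>V-U. E u w}" using UV by auto
    then show ?thesis using finU fin by (simp add: card_Un_disjoint disjoint_iff)
  qed
  have "cut = (\<Sum>u\<in>U. \<Sum>w\<in>V-U. if E u w then 1 else 0)"
    unfolding cut_def by (intro sum.cong refl card_filter_eq_sum_indicator) (use fin in auto)
  also have "\<dots> = (\<Sum>w\<in>V-U. \<Sum>u\<in>U. if E w u then 1 else 0)"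
    by (subst sum.swap) (use sym in \<open>auto intro!: sum.cong\<close>)
  also have "\<dots> = (\<Sum>w\<in>V-U. card {u\<in>U. E w u})"
    using finU by (simp add: card_filter_eq_sum_indicator)
  also have "\<dots> \<le> (\<Sum>w\<in>V-U. card {u\<in>V. E w u})"
    by (intro sum_mono card_mono) (use fin UV in auto)
  finally have cut_le: "cut \<le> (\<Sum>w\<in>V-U. card {u\<in>V. E w u})" .
  have "(\<Sum>u\<in>U. card {w\<in>V. E u w}) = 2 * e_in E U + cut"
    using sum_degree_eq_twice_edges[of U E, OF finU sym irr] by (simp add: cut_def deg_split sum.distrib)
  moreover have "(\<Sum>u\<in>U. card {w\<in>V. E u w}) + (\<Sum>u\<in>V-U. card {w\<in>V. E u w}) = 2 * e_in E V"
    using sum.subset_diff[OF UV fin, of "\<lambda>u. card {w\<in>V. E u w}"]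
      sum_degree_eq_twice_edges[of V E, OF fin sym irr]
    by linarith
  ultimately show ?thesis using cut_le by linarith
qed

lemma eigenvalue_sq_le_edges_add_nbhd_edges:
  assumes G: "simple_graph V E" and ev: "adj_eigvec V E \<mu> x"
    and u: "u \<in> V" and pos: "x u > 0" and max: "\<forall>v\<in>V. x v \<le> x u"
  shows "\<mu> * \<mu> \<le> real (num_edges V E + e_in E (neighbourhood E u))"
proof -
  have fin: "finite V" and inV: "\<And>v w. E v w \<Longrightarrow> v \<in> V \<and> w \<in> V"
    and sym: "\<And>v w. E v w \<Longrightarrow> E w v" and irr: "\<And>v. \<not> E v v"
    using G unfolding simple_graph_def by auto
  define U where "U = neighbourhood E u"
  have UV: "U \<subseteq> V" unfolding U_def neighbourhood_def using inV by auto
  have eq: "\<mu> * x v = (\<Sum>w\<in>{w\<in>V. E v w}. x w)" if "v \<in> V" for v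
    using ev that fin unfolding adj_eigvec_def by (simp add: sum.inter_filter)
  have "{w\<in>V. E u w} = U" unfolding U_def neighbourhood_def using inV by auto
  then have at_u: "\<mu> * x u = (\<Sum>v\<in>U. x v)" using eq[OF u] by simp
  have at_nbr: "\<mu> * x v \<le> x u * card {w\<in>V. E v w}" if "v \<in> U" for v
  proof -
    have "\<mu> * x v = (\<Sum>w\<in>{w\<in>V. E v w}. x w)" using eq that UV by auto
    also have "\<dots> \<le> (\<Sum>w\<in>{w\<in>V. E v w}. x u)" by (rule sum_mono) (use max in auto)
    finally show ?thesis by (simp add: mult.commute)
  qed
  have "\<mu> * \<mu> * x u = (\<Sum>v\<in>U. \<mu> * x v)"
    using at_u by (simp add: sum_distrib_left mult.assoc)
  also have "\<dots> \<le> x u * (\<Sum>v\<in>U. card {w\<in>V. E v w})"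
    using at_nbr by (simp add: sum_distrib_left sum_mono)
  also have "\<dots> \<le> x u * (e_in E V + e_in E U)"
  proof -
    have "(\<Sum>v\<in>U. card {w\<in>V. E v w}) \<le> e_in E V + e_in E U"
      by (rule sum_degree_le_edges_add_inner_edges) (use fin sym irr UV in auto)
    then have "real (\<Sum>v\<in>U. card {w\<in>V. E v w}) \<le> real (e_in E V + e_in E U)"
      by (rule of_nat_mono)
    then show ?thesis using pos by (intro mult_left_mono) simp_all
  qed
  finally show ?thesis using pos unfolding U_def num_edges_def by (simp add: mult.commute)
qed

definition adj_mat :: "nat \<Rightarrow> (nat \<Rightarrow> nat \<Rightarrow> bool) \<Rightarrow> real mat" where
  "adj_mat N E = mat N N (\<lambda>(i, j). if E i j then 1 else 0)"

lemma eigenvector_adj_mat: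
  assumes ev: "adj_eigvec {0..<N} E \<mu> y"
  shows "eigenvector (adj_mat N E) (vec N y) \<mu>"
  unfolding eigenvector_def
proof (intro conjI)
  show "vec N y \<in> carrier_vec (dim_row (adj_mat N E))" by (simp add: adj_mat_def)
  obtain i where "i < N" "y i \<noteq> 0" using ev unfolding adj_eigvec_def by auto
  then show "vec N y \<noteq> 0\<^sub>v (dim_row (adj_mat N E))"
    by (metis adj_mat_def dim_row_mat(1) index_vec index_zero_vec(1))
  show "adj_mat N E *\<^sub>v vec N y = \<mu> \<cdot>\<^sub>v vec N y"
  proof (rule eq_vecI)
    fix i assume "i < dim_vec (\<mu> \<cdot>\<^sub>v vec N y)"
    then have i: "i < N" by simp
    have "(adj_mat N E *\<^sub>v vec N y) $ i = (\<Sum>j\<in>{0..<N}. (if E i j then 1 else 0) * y j)"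
      using i by (simp add: adj_mat_def scalar_prod_def)
    also have "\<dots> = (\<Sum>j\<in>{0..<N}. if E i j then y j else 0)"
      by (intro sum.cong) auto
    also have "\<dots> = \<mu> * y i" using ev i unfolding adj_eigvec_def by auto
    finally show "(adj_mat N E *\<^sub>v vec N y) $ i = (\<mu> \<cdot>\<^sub>v vec N y) $ i" using i by simp
  qed (simp add: adj_mat_def)
qed

lemma finite_adj_eigvals:
  fixes E :: "nat \<Rightarrow> nat \<Rightarrow> bool"
  shows "finite {\<mu>. adj_eigval {0..<N} E \<mu>}"
proof -
  have A: "adj_mat N E \<in> carrier_mat N N" by (simp add: adj_mat_def)
  have "{\<mu>. adj_eigval {0..<N} E \<mu>} \<subseteq> {\<mu>. poly (char_poly (adj_mat N E)) \<mu> = 0}"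
    using eigenvector_adj_mat eigenvalue_root_char_poly[OF A]
    unfolding adj_eigval_def eigenvalue_def by blast
  moreover have "char_poly (adj_mat N E) \<noteq> 0" using degree_monic_char_poly[OF A] by auto
  ultimately show ?thesis using poly_roots_finite finite_subset by blast
qed

lemma abs_eigval_le_spectral_radius:
  fixes E :: "nat \<Rightarrow> nat \<Rightarrow> bool"
  assumes "adj_eigvec {0..<N} E \<mu> y"
  shows "\<bar>\<mu>\<bar> \<le> spectral_radius_graph {0..<N} E"
proof -
  have "{\<bar>\<nu>\<bar> | \<nu>. adj_eigval {0..<N} E \<nu>} = abs ` {\<nu>. adj_eigval {0..<N} E \<nu>}" by auto
  then have "finite {\<bar>\<nu>\<bar> | \<nu>. adj_eigval {0..<N} E \<nu>}" using finite_adj_eigvals[of N E] by simp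
  then show ?thesis
    using assms unfolding spectral_radius_graph_def adj_eigval_def by (auto intro: Max_ge)
qed

text \<open>The book K_2 \<or> kK_1 with spine {0, 1} and pages 2, ..., k + 1; for r = 1 the vertices
k + 2, k + 3 form an extra disjoint edge (for r \<ge> 2 the extra block would be a clique,
so only r \<le> 1 is used).\<close>

definition book_graph :: "nat \<Rightarrow> nat \<Rightarrow> nat \<Rightarrow> nat \<Rightarrow> bool" where
  "book_graph k r u v \<longleftrightarrow> u < k+2+2*r \<and> v < k+2+2*r \<and> u \<noteq> v \<and>
     ((u \<le> 1 \<and> v \<le> k+1) \<or> (v \<le> 1 \<and> u \<le> k+1) \<or> (k+2 \<le> u \<and> k+2 \<le> v))"

lemma simple_graph_book: "simple_graph {0..<k+2+2*r} (book_graph k r)"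
  unfolding simple_graph_def book_graph_def by auto

lemma no_isolated_book:
  assumes "r \<le> 1"
  shows "no_isolated {0..<k+2+2*r} (book_graph k r)"
  unfolding no_isolated_def
proof
  fix v assume v: "v \<in> {0..<k+2+2*r}"
  show "\<exists>w. book_graph k r v w"
  proof (cases "v \<le> k+1")
    case True
    then show ?thesis by (intro exI[of _ "if v = 0 then 1 else 0"]) (auto simp: book_graph_def)
  next
    case False
    then have "r = 1" using v assms by auto
    then show ?thesis using v False by (intro exI[of _ "2*k+5-v"]) (auto simp: book_graph_def, presburger)
  qed
qed

lemma book_triangle_contains_spine:
  assumes ab: "book_graph k r a b" and bc: "book_graph k r b c" and ac: "book_graph k r a c"
    and r: "r \<le> 1"
  shows "(a = 0 \<or> b = 0 \<or> c = 0) \<and> (a = 1 \<or> b = 1 \<or> c = 1)"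
proof -
  have pages: "a \<le> k+1" "b \<le> k+1" "c \<le> k+1"
    using ab bc ac r unfolding book_graph_def by auto
  have "x \<le> 1 \<or> y \<le> 1" if "book_graph k r x y" "x \<le> k+1" for x y
    using that unfolding book_graph_def by auto
  then have "a \<le> 1 \<or> b \<le> 1" "b \<le> 1 \<or> c \<le> 1" "a \<le> 1 \<or> c \<le> 1"
    using ab bc ac pages by blast+
  moreover have "a \<noteq> b" "b \<noteq> c" "a \<noteq> c" using ab bc ac unfolding book_graph_def by auto
  ultimately show ?thesis by presburger
qed

text \<open>The two triangles 0 1 2 and 0 3 4 of F_6 share only the apex 0, but each of them would
have to contain both spine vertices.\<close>

lemma F6_free_book:
  assumes r: "r \<le> 1"
  shows "F6_free {0..<k+2+2*r} (book_graph k r)"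
  unfolding F6_free_def contains_subgraph_def
proof
  assume "\<exists>f. inj_on f F6_V \<and> f ` F6_V \<subseteq> {0..<k+2+2*r} \<and>
    (\<forall>u\<in>F6_V. \<forall>v\<in>F6_V. F6_E u v \<longrightarrow> book_graph k r (f u) (f v))"
  then obtain f where inj: "inj_on f F6_V"
    and hom: "\<And>u v. u \<in> F6_V \<Longrightarrow> v \<in> F6_V \<Longrightarrow> F6_E u v \<Longrightarrow> book_graph k r (f u) (f v)"
    by blast
  have edge: "book_graph k r (f u) (f v)" if "u \<le> 5" "v \<le> 5" "F6_E u v" for u v
    using hom that unfolding F6_V_def by auto
  have "F6_E 0 1" "F6_E 1 2" "F6_E 0 2" "F6_E 0 3" "F6_E 3 4" "F6_E 0 4"
    by (auto simp: F6_E_def F6_V_def)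
  then have "(f 0 = 0 \<or> f 1 = 0 \<or> f 2 = 0) \<and> (f 0 = 1 \<or> f 1 = 1 \<or> f 2 = 1)"
    "(f 0 = 0 \<or> f 3 = 0 \<or> f 4 = 0) \<and> (f 0 = 1 \<or> f 3 = 1 \<or> f 4 = 1)"
    using book_triangle_contains_spine[OF edge edge edge r] by simp_all
  moreover have "f i \<noteq> f j" if "i \<le> 5" "j \<le> 5" "i \<noteq> j" for i j
    using inj that unfolding inj_on_def F6_V_def by auto
  then have "f 0 \<noteq> f 1" "f 0 \<noteq> f 2" "f 0 \<noteq> f 3" "f 0 \<noteq> f 4"
    "f 1 \<noteq> f 3" "f 1 \<noteq> f 4" "f 2 \<noteq> f 3" "f 2 \<noteq> f 4"
    by simp_all
  ultimately show False by metis
qed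

lemma num_edges_book:
  assumes r: "r \<le> 1"
  shows "num_edges {0..<k+2+2*r} (book_graph k r) = 2*k+1+r"
proof -
  let ?N = "k+2+2*r"
  let ?d = "\<lambda>u. card {w\<in>{0..<?N}. book_graph k r u w}"
  have spine: "?d u = k+1" if "u \<in> {0..<2}" for u
  proof -
    have "{w\<in>{0..<?N}. book_graph k r u w} = {0..<k+2} - {u}"
      using that by (auto simp: book_graph_def)
    then show ?thesis using that by simp
  qed
  have page: "?d u = 2" if "u \<in> {2..<k+2}" for u
  proof -
    have "{w\<in>{0..<?N}. book_graph k r u w} = {0, 1}" using that by (auto simp: book_graph_def)
    then show ?thesis by simp
  qed
  have extra: "?d u = 1" if "u \<in> {k+2..<?N}" for u
  proof -
    have "r = 1" using that r by auto
    then have "{w\<in>{0..<?N}. book_graph k r u w} = {2*k+5-u}"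
      using that by (auto simp: book_graph_def, presburger)
    then show ?thesis by simp
  qed
  have "2 * num_edges {0..<?N} (book_graph k r) = (\<Sum>u\<in>{0..<?N}. ?d u)"
    unfolding num_edges_def by (rule sum_degree_eq_twice_edges[symmetric]) (auto simp: book_graph_def)
  also have "\<dots> = (\<Sum>u\<in>{0..<k+2}. ?d u) + (\<Sum>u\<in>{k+2..<?N}. ?d u)"
    by (rule sum.atLeastLessThan_concat[symmetric]) simp_all
  also have "(\<Sum>u\<in>{0..<k+2}. ?d u) = (\<Sum>u\<in>{0..<2}. ?d u) + (\<Sum>u\<in>{2..<k+2}. ?d u)"
    by (rule sum.atLeastLessThan_concat[symmetric]) simp_all
  also have "(\<Sum>u\<in>{0..<2}. ?d u) = (\<Sum>u\<in>{0..<2::nat}. k+1)" by (intro sum.cong refl spine)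
  also have "(\<Sum>u\<in>{2..<k+2}. ?d u) = (\<Sum>u\<in>{2..<k+2}. 2)" by (intro sum.cong refl page)
  also have "(\<Sum>u\<in>{k+2..<?N}. ?d u) = (\<Sum>u\<in>{k+2..<?N}. 1)" by (intro sum.cong refl extra)
  finally show ?thesis by simp
qed

lemma in_GmF6_book:
  assumes "r \<le> 1"
  shows "in_GmF6 (2*k+1+r) {0..<k+2+2*r} (book_graph k r)"
  unfolding in_GmF6_def
  using simple_graph_book F6_free_book num_edges_book no_isolated_book assms by blast

definition book_root :: "nat \<Rightarrow> real" where
  "book_root k = (1 + sqrt (1 + 8 * real k)) / 2"

lemma book_root_sq: "book_root k * book_root k = book_root k + 2 * real k"
proof -
  have "sqrt (1 + 8 * real k) * sqrt (1 + 8 * real k) = 1 + 8 * real k" by simp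
  then show ?thesis unfolding book_root_def by (simp add: field_simps)
qed

lemma book_root_ge_9:
  assumes "k \<ge> 43"
  shows "book_root k \<ge> 9"
proof -
  have "sqrt 289 \<le> sqrt (1 + 8 * real k)" using assms by (intro real_sqrt_le_mono) simp
  moreover have "sqrt (289::real) = 17" by (simp add: real_sqrt_eq_iff[symmetric])
  ultimately show ?thesis unfolding book_root_def by simp
qed

lemma book_eigvec:
  assumes r: "r \<le> 1"
  shows "adj_eigvec {0..<k+2+2*r} (book_graph k r) (book_root k)
           (\<lambda>u. if u \<le> 1 then book_root k / 2 else if u \<le> k+1 then 1 else 0)"
proof -
  let ?N = "k+2+2*r"
  define \<mu> where "\<mu> = book_root k"
  define y where "y = (\<lambda>u::nat. if u \<le> 1 then \<mu>/2 else if u \<le> k+1 then 1 else (0::real))"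
  have "\<mu> > 0" unfolding \<mu>_def book_root_def by (simp add: add_pos_nonneg)
  have mu_sq: "\<mu> * \<mu> = \<mu> + 2 * real k" unfolding \<mu>_def by (rule book_root_sq)
  have total: "(\<Sum>w\<in>{0..<k+2}. y w) = \<mu> + real k"
  proof -
    have "(\<Sum>w\<in>{0..<k+2}. y w) = (\<Sum>w\<in>{0..<2}. y w) + (\<Sum>w\<in>{2..<k+2}. y w)"
      by (rule sum.atLeastLessThan_concat[symmetric]) simp_all
    also have "\<dots> = \<mu> + (\<Sum>w\<in>{2..<k+2}. 1)"
      by (intro arg_cong2[where f = "(+)"] sum.cong) (auto simp: y_def numeral_2_eq_2)
    finally show ?thesis by simp
  qed
  have eq: "(\<Sum>w\<in>{w\<in>{0..<?N}. book_graph k r v w}. y w) = \<mu> * y v" if v: "v < ?N" for v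
  proof (cases "v \<le> 1")
    case True
    then have "{w\<in>{0..<?N}. book_graph k r v w} = {0..<k+2} - {v}" by (auto simp: book_graph_def)
    then have "(\<Sum>w\<in>{w\<in>{0..<?N}. book_graph k r v w}. y w) = \<mu> + real k - \<mu>/2"
      using total True by (simp add: sum_diff1 y_def)
    then show ?thesis using True mu_sq by (simp add: y_def field_simps)
  next
    case False
    show ?thesis
    proof (cases "v \<le> k+1")
      case True
      then have "{w\<in>{0..<?N}. book_graph k r v w} = {0, 1}" using False by (auto simp: book_graph_def)
      then show ?thesis using True False by (simp add: y_def)
    next
      case page: False
      then have "r = 1" using v r by auto
      then have "{w\<in>{0..<?N}. book_graph k r v w} = {2*k+5-v}"
        using v page by (auto simp: book_graph_def, presburger)
      moreover have "2*k+5-v > k+1" using v \<open>r = 1\<close> by simp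
      ultimately show ?thesis using page by (simp add: y_def)
    qed
  qed
  show ?thesis
    unfolding adj_eigvec_def y_def[symmetric] \<mu>_def[symmetric]
  proof (intro conjI allI impI ballI)
    show "y v = 0" if "v \<notin> {0..<?N}" for v using that by (simp add: y_def)
    show "\<exists>v\<in>{0..<?N}. y v \<noteq> 0" using \<open>\<mu> > 0\<close> by (intro bexI[of _ 0]) (simp_all add: y_def)
    fix v assume "v \<in> {0..<?N}"
    have "(\<Sum>w\<in>{0..<?N}. if book_graph k r v w then y w else 0)
        = (\<Sum>w\<in>{w\<in>{0..<?N}. book_graph k r v w}. y w)"
      by (rule sum.inter_filter[symmetric]) simp
    also have "\<dots> = \<mu> * y v" using \<open>v \<in> {0..<?N}\<close> by (intro eq) simp
    finally show "(\<Sum>w\<in>{0..<?N}. if book_graph k r v w then y w else 0) = \<mu> * y v" .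
  qed
qed

theorem lemma3p1:
  fixes m :: nat and V :: "'a set" and E :: "'a \<Rightarrow> 'a \<Rightarrow> bool"
    and x :: "'a \<Rightarrow> real" and ustar :: 'a
  assumes "m \<ge> 88"
    and "in_GmF6 m V E"
    and "\<And>(W :: nat set) EW. in_GmF6 m W EW \<Longrightarrow>
           spectral_radius_graph W EW \<le> spectral_radius_graph V E"
    and "connected_graph V E"
    and "perron_vector V E x"
    and "ustar \<in> V" and "\<forall>v\<in>V. x v \<le> x ustar"
  shows "e_in E (neighbourhood E ustar) \<ge> 4 \<and>
         (\<exists>u\<in>neighbourhood E ustar. \<exists>w\<in>neighbourhood E ustar. E u w)"
proof -
  define lam where "lam = spectral_radius_graph V E"
  define k where "k = (m - 1) div 2"
  define r where "r = m - 1 - 2 * k"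
  have r: "r \<le> 1" and m: "m = 2*k+1+r" and k: "k \<ge> 43"
    using assms(1) unfolding r_def k_def by auto
  have "book_root k \<le> spectral_radius_graph {0..<k+2+2*r} (book_graph k r)"
    using abs_eigval_le_spectral_radius[OF book_eigvec[OF r, of k]] by (meson abs_ge_self order_trans)
  also have "\<dots> \<le> lam" unfolding lam_def using assms(3) in_GmF6_book[OF r] m by blast
  finally have "book_root k \<le> lam" .
  then have "book_root k + 2 * real k \<le> lam * lam"
    using book_root_sq[of k] book_root_ge_9[OF k] mult_mono[of "book_root k" lam "book_root k" lam]
    by simp
  moreover have "lam * lam \<le> real (m + e_in E (neighbourhood E ustar))"
  proof -
    have G: "simple_graph V E" and "num_edges V E = m"
      using assms(2) unfolding in_GmF6_def by auto
    moreover have "adj_eigvec V E lam x" and "x ustar > 0"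
      using assms(5,6) unfolding perron_vector_def lam_def by auto
    ultimately show ?thesis
      using eigenvalue_sq_le_edges_add_nbhd_edges[OF G _ assms(6) _ assms(7)] by simp
  qed
  ultimately have e4: "e_in E (neighbourhood E ustar) \<ge> 4"
    using book_root_ge_9[OF k] m r by linarith
  then have "edges_in E (neighbourhood E ustar) \<noteq> {}" unfolding e_in_def by auto
  then show ?thesis using e4 unfolding edges_in_def by auto
qed

end
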